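(* Let $\tau_n:=\max\{k\ge1:U_{n-k}=k\}$ (the number of red balls in the urn right after the last black ball has been removed). Then $\tau_n$ has the same distribution as $\tau_n':=\max\{k\ge1:U_k=k\}$, and for $k\ge1$ \[ \mathbf P(\tau_n\ge k)=\frac{(n-k)(n-k-1)\cdots(n-2k+1)}{(n-1)(n-2)\cdots(n-k)}. \] Consequently, for every $t\ge0$, $\mathbf P(\tau_n/\sqrt n\ge t)\to e^{-t^2}$ as $n\to\infty$.
   Context: Urn process: let $n\ge2$. An urn initially contains $n$ black balls. It is emptied in $n$ steps: in each of the first $n-1$ steps a uniformly random pair of balls is removed from the urn and replaced by one red ball; in step $n$ the last remaining ball is removed. $U_k$ is the number of red balls in the urn after $k$ steps, $0\le k\le n$. *)

theory Defs
  imports "HOL-Probability.Probability"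
begin

text \<open>Urn state: (number of black balls, number of red balls).
  Balls are labelled 0,...,b+r-1; labels below b are black, the others red.\<close>

definition urn_step :: "nat \<times> nat \<Rightarrow> (nat \<times> nat) pmf" where
  "urn_step s = (case s of (b, r) \<Rightarrow>
     map_pmf (\<lambda>S. let nb = card (S \<inter> {..<b}) in (b - nb, r - (2 - nb) + 1))
       (pmf_of_set {S. S \<subseteq> {0..<b + r} \<and> card S = 2}))"

fun urn_traj :: "nat \<Rightarrow> nat \<times> nat \<Rightarrow> (nat \<times> nat) list pmf" where
  "urn_traj 0 s = return_pmf [s]"
| "urn_traj (Suc m) s = urn_step s \<bind> (\<lambda>s'. map_pmf (Cons s) (urn_traj m s'))"

text \<open>Law of the red-ball process (U_0,...,U_n): the first n-1 steps are pair
  replacements starting from n black balls; step n removes the last ball, so U_n = 0.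
  Values for indices beyond n are set to 0 (irrelevant).\<close>

definition urn :: "nat \<Rightarrow> (nat \<Rightarrow> nat) pmf" where
  "urn n = map_pmf (\<lambda>xs k. if k < n then snd (xs ! k) else 0) (urn_traj (n - 1) (n, 0))"

definition tau :: "nat \<Rightarrow> (nat \<Rightarrow> nat) \<Rightarrow> nat" where
  "tau n U = Max {k. 1 \<le> k \<and> k \<le> n \<and> U (n - k) = k}"

definition tau' :: "nat \<Rightarrow> (nat \<Rightarrow> nat) \<Rightarrow> nat" where
  "tau' n U = Max {k. 1 \<le> k \<and> k \<le> n \<and> U k = k}"

end

theory Submission
  imports Defs "HOL-Real_Asymp.Real_Asymp"
begin

(* One pair step
   moves (b, r) to (b - 2, r + 1), (b - 1, r) or (b, r - 1) with probabilities
   C(b,2), b r, C(r,2) divided by C(b + r, 2).  From n black balls the state after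
   m of the n - 1 pair steps has the explicit law
     P(b, r) = C(b + r, b) C(m - 1, r - 1) / C(n - 1, m)    (b + r + m = n, r >= 1),
   proved by induction on m from a binomial identity for the three predecessors.
   Pathwise, tau_n >= k iff no black ball is left after n - k steps, and
   tau'_n >= k iff each of the first k steps produced a red ball, i.e. the state is
   (0, k) at time n - k, resp. (n - 2k, k) at time k.  Both probabilities evaluate to
   C(n - k, k) / C(n - 1, k), the falling-factorial ratio of the theorem; equal tails
   give equal laws.  Finally each factor of this product is squeezed between
   exponentials, and for k ~ t sqrt n both bounds tend to exp (-t^2). *)

fun urn_move :: "nat \<times> nat \<Rightarrow> nat \<times> nat \<Rightarrow> bool" where
  "urn_move (b, r) s' \<longleftrightarrow>
     (2 \<le> b \<and> s' = (b - 2, r + 1)) \<or> (1 \<le> b \<and> 1 \<le> r \<and> s' = (b - 1, r)) \<or> (2 \<le> r \<and> s' = (b, r - 1))"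

lemma urn_move_facts:
  assumes "urn_move s s'"
  shows "fst s' + snd s' + 1 = fst s + snd s" "1 \<le> snd s'" "fst s' \<le> fst s" "snd s' \<le> snd s + 1"
  using assms by (cases s; auto)+

lemma urn_move_predecessors:
  assumes "urn_move s (b, r)"
  shows "s \<in> {(b + 2, r - 1), (b + 1, r), (b, r + 1)}"
  using assms by (cases s) auto

definition ball_pairs :: "nat \<Rightarrow> nat set set" where
  "ball_pairs T = {S. S \<subseteq> {0..<T} \<and> card S = 2}"

definition pairs_with_blacks :: "nat \<Rightarrow> nat \<Rightarrow> nat \<Rightarrow> nat set set" where
  "pairs_with_blacks b r j = {S \<in> ball_pairs (b + r). card (S \<inter> {..<b}) = j}"

lemma finite_ball_pairs: "finite (ball_pairs T)"
  unfolding ball_pairs_def by (rule finite_subset[of _ "Pow {0..<T}"]) auto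

lemma card_ball_pairs: "card (ball_pairs T) = T choose 2"
  unfolding ball_pairs_def by (subst n_subsets) auto

lemma ball_pairs_nonempty: "2 \<le> T \<Longrightarrow> ball_pairs T \<noteq> {}"
  using card_ball_pairs[of T] by (auto simp: zero_less_binomial_iff)

lemma urn_step_pairs:
  "urn_step (b, r) = map_pmf (\<lambda>S. let j = card (S \<inter> {..<b}) in (b - j, r - (2 - j) + 1))
     (pmf_of_set (ball_pairs (b + r)))"
  unfolding urn_step_def ball_pairs_def by simp

lemma pair_black_count:
  assumes "S \<in> ball_pairs (b + r)"
  defines "j \<equiv> card (S \<inter> {..<b})"
  shows "j \<le> 2" "j \<le> b" "2 - j \<le> r"
proof -
  have S: "S \<subseteq> {0..<b + r}" "card S = 2" "finite S"
    using assms(1) card.infinite unfolding ball_pairs_def by fastforce+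
  show "j \<le> 2" unfolding j_def using S by (metis card_mono inf_le1)
  show "j \<le> b" unfolding j_def by (metis card_lessThan card_mono finite_lessThan inf_le2)
  have "card (S - {..<b}) = 2 - j"
    using card_Int_Diff[OF S(3), of "{..<b}"] S(2) unfolding j_def by simp
  moreover have "S - {..<b} \<subseteq> {b..<b + r}" using S(1) by auto
  hence "card (S - {..<b}) \<le> r" using card_mono[of "{b..<b + r}"] by fastforce
  ultimately show "2 - j \<le> r" by simp
qed

lemma set_pmf_urn_step:
  assumes "2 \<le> b + r" "s' \<in> set_pmf (urn_step (b, r))"
  shows "urn_move (b, r) s'"
proof -
  obtain S where S: "S \<in> ball_pairs (b + r)"
    and s': "s' = (let j = card (S \<inter> {..<b}) in (b - j, r - (2 - j) + 1))"
    using assms unfolding urn_step_pairs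
    by (auto simp: finite_ball_pairs ball_pairs_nonempty)
  show ?thesis using pair_black_count[OF S] s' by (auto simp: Let_def numeral_2_eq_2 le_Suc_eq)
qed

lemma pmf_urn_step:
  assumes "2 \<le> b + r" "j \<le> 2" "j \<le> b" "2 - j \<le> r"
  shows "pmf (urn_step (b, r)) (b - j, r - (2 - j) + 1)
           = real (card (pairs_with_blacks b r j)) / real ((b + r) choose 2)"
proof -
  let ?f = "\<lambda>S. let j = card (S \<inter> {..<b}) in (b - j, r - (2 - j) + 1)"
  have "ball_pairs (b + r) \<inter> ?f -` {(b - j, r - (2 - j) + 1)} = pairs_with_blacks b r j"
    using pair_black_count assms unfolding pairs_with_blacks_def
    by (auto simp: Let_def)
  thus ?thesis
    unfolding urn_step_pairs using assms(1)
    by (simp add: pmf_map measure_pmf_of_set finite_ball_pairs ball_pairs_nonempty card_ball_pairs)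
qed

lemma pairs_with_two_blacks: "pairs_with_blacks b r 2 = {S. S \<subseteq> {..<b} \<and> card S = 2}"
proof -
  have key: "card (S \<inter> {..<b}) = 2 \<longleftrightarrow> S \<subseteq> {..<b}" if "card S = 2" for S :: "nat set"
  proof
    assume "card (S \<inter> {..<b}) = 2"
    moreover have "finite S" using that card.infinite by fastforce
    ultimately have "S \<inter> {..<b} = S" using that card_subset_eq[of S "S \<inter> {..<b}"] by simp
    thus "S \<subseteq> {..<b}" by blast
  next
    assume "S \<subseteq> {..<b}"
    hence "S \<inter> {..<b} = S" by blast
    thus "card (S \<inter> {..<b}) = 2" using that by simp
  qed
  show ?thesis
  proof (intro set_eqI)
    fix S show "S \<in> pairs_with_blacks b r 2 \<longleftrightarrow> S \<in> {S. S \<subseteq> {..<b} \<and> card S = 2}"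
      unfolding pairs_with_blacks_def ball_pairs_def using key[of S] by auto
  qed
qed

lemma pairs_with_no_blacks: "pairs_with_blacks b r 0 = {S. S \<subseteq> {b..<b + r} \<and> card S = 2}"
  unfolding pairs_with_blacks_def ball_pairs_def
  by (auto simp: disjoint_iff not_less)

lemma card_pairs_with_blacks:
  "card (pairs_with_blacks b r 2) = b choose 2"
  "card (pairs_with_blacks b r 0) = r choose 2"
  "card (pairs_with_blacks b r 1) = b * r"
proof -
  show c2: "card (pairs_with_blacks b r 2) = b choose 2"
    unfolding pairs_with_two_blacks by (subst n_subsets) auto
  show c0: "card (pairs_with_blacks b r 0) = r choose 2"
    unfolding pairs_with_no_blacks by (subst n_subsets) auto
  (* The remaining pairs are counted by complement. *)
  have split: "ball_pairs (b + r) = pairs_with_blacks b r 0 \<union> pairs_with_blacks b r 1 \<union> pairs_with_blacks b r 2"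
  proof (intro equalityI subsetI)
    fix S assume S: "S \<in> ball_pairs (b + r)"
    have "c \<in> {0, 1, 2}" if "c \<le> 2" for c :: nat using that by auto
    hence "card (S \<inter> {..<b}) \<in> {0, 1, 2}" using pair_black_count(1)[OF S] .
    thus "S \<in> pairs_with_blacks b r 0 \<union> pairs_with_blacks b r 1 \<union> pairs_with_blacks b r 2"
      using S unfolding pairs_with_blacks_def by auto
  qed (auto simp: pairs_with_blacks_def)
  have fin: "finite (pairs_with_blacks b r j)" for j
    using finite_ball_pairs unfolding pairs_with_blacks_def by simp
  have "card (ball_pairs (b + r))
      = card (pairs_with_blacks b r 0) + card (pairs_with_blacks b r 1) + card (pairs_with_blacks b r 2)"
  proof -
    have d: "pairs_with_blacks b r 0 \<inter> pairs_with_blacks b r 1 = {}"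
      "(pairs_with_blacks b r 0 \<union> pairs_with_blacks b r 1) \<inter> pairs_with_blacks b r 2 = {}"
      unfolding pairs_with_blacks_def by auto
    show ?thesis unfolding split using fin d by (simp add: card_Un_disjoint)
  qed
  moreover have "(b + r) choose 2 = (b choose 2) + b * r + (r choose 2)" \<comment> \<open>Vandermonde\<close>
    by (induction r) (simp_all add: numeral_2_eq_2)
  ultimately show "card (pairs_with_blacks b r 1) = b * r"
    using c0 c2 card_ball_pairs by simp
qed

lemma pmf_urn_step_two_blacks:
  "2 \<le> b \<Longrightarrow> pmf (urn_step (b, r)) (b - 2, r + 1) = real (b choose 2) / real ((b + r) choose 2)"
  using pmf_urn_step[of b r 2] card_pairs_with_blacks(1)[of b r] by simp

lemma pmf_urn_step_mixed:
  "1 \<le> b \<Longrightarrow> 1 \<le> r \<Longrightarrow> pmf (urn_step (b, r)) (b - 1, r) = real (b * r) / real ((b + r) choose 2)"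
  using pmf_urn_step[of b r 1] card_pairs_with_blacks(3)[of b r] by simp

lemma pmf_urn_step_two_reds:
  assumes "2 \<le> r"
  shows "pmf (urn_step (b, r)) (b, r - 1) = real (r choose 2) / real ((b + r) choose 2)"
proof -
  have "r - (2 - 0) + 1 = r - 1" using assms by simp
  thus ?thesis using pmf_urn_step[of b r 0] card_pairs_with_blacks(2)[of b r] assms by simp
qed

fun urn_iter :: "nat \<Rightarrow> nat \<times> nat \<Rightarrow> (nat \<times> nat) pmf" where
  "urn_iter 0 s = return_pmf s"
| "urn_iter (Suc m) s = urn_step s \<bind> urn_iter m"

(* The unapplied form, needed when urn_iter 0 appears as the argument of a bind. *)
lemma urn_iter_0_fun [simp]: "urn_iter 0 = return_pmf"
  by (rule ext) simp

lemma urn_iter_Suc_right: "urn_iter (Suc m) s = urn_iter m s \<bind> urn_step"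
proof (induction m arbitrary: s)
  case 0
  show ?case by (simp add: bind_return_pmf bind_return_pmf')
next
  case (Suc m)
  have "urn_iter (Suc m) = (\<lambda>s'. urn_iter m s' \<bind> urn_step)" using Suc.IH by auto
  hence "urn_iter (Suc (Suc m)) s = urn_step s \<bind> (\<lambda>s'. urn_iter m s' \<bind> urn_step)" by simp
  thus ?case by (simp add: bind_assoc_pmf)
qed

lemma urn_traj_nth: "j \<le> m \<Longrightarrow> map_pmf (\<lambda>xs. xs ! j) (urn_traj m s) = urn_iter j s"
proof (induction m arbitrary: s j)
  case 0
  then show ?case by simp
next
  case (Suc m)
  show ?case
  proof (cases j)
    case 0
    then show ?thesis by (simp add: map_bind_pmf map_pmf_comp)
  next
    case (Suc j')
    hence "map_pmf (\<lambda>xs. xs ! j) (urn_traj (Suc m) s)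
        = urn_step s \<bind> (\<lambda>s'. map_pmf (\<lambda>xs. xs ! j') (urn_traj m s'))"
      by (simp add: map_bind_pmf map_pmf_comp)
    also have "\<dots> = urn_step s \<bind> urn_iter j'" using Suc.IH[of j'] Suc.prems Suc by simp
    finally show ?thesis using Suc by simp
  qed
qed

lemma set_pmf_urn_traj:
  assumes "xs \<in> set_pmf (urn_traj m s)" "m < fst s + snd s"
  shows "length xs = Suc m" "xs ! 0 = s" "\<And>i. i < m \<Longrightarrow> urn_move (xs ! i) (xs ! Suc i)"
proof -
  have "length xs = Suc m \<and> xs ! 0 = s \<and> (\<forall>i<m. urn_move (xs ! i) (xs ! Suc i))"
    using assms
  proof (induction m arbitrary: s xs)
    case (Suc m)
    from Suc.prems(1) obtain s' ys where s': "s' \<in> set_pmf (urn_step s)"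
      and ys: "ys \<in> set_pmf (urn_traj m s')" and xs: "xs = s # ys" by auto
    have move: "urn_move s s'" using set_pmf_urn_step[of "fst s" "snd s" s'] s' Suc.prems(2) by simp
    hence "m < fst s' + snd s'" using urn_move_facts(1)[OF move] Suc.prems(2) by simp
    from Suc.IH[OF ys this] have "length ys = Suc m" "ys ! 0 = s'"
      "\<forall>i<m. urn_move (ys ! i) (ys ! Suc i)" by auto
    thus ?case using move unfolding xs by (auto simp: less_Suc_eq_0_disj)
  qed simp
  thus "length xs = Suc m" "xs ! 0 = s" "\<And>i. i < m \<Longrightarrow> urn_move (xs ! i) (xs ! Suc i)" by auto
qed

locale urn_path =
  fixes xs :: "(nat \<times> nat) list"
  assumes moves: "\<And>i. Suc i < length xs \<Longrightarrow> urn_move (xs ! i) (xs ! Suc i)"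
begin

lemma total:
  assumes "i \<le> j" "j < length xs"
  shows "fst (xs ! j) + snd (xs ! j) + (j - i) = fst (xs ! i) + snd (xs ! i)"
  using assms(1)
proof (induction j rule: dec_induct)
  case (step k)
  then show ?case using urn_move_facts(1)[OF moves[of k]] assms(2) by (simp add: Suc_diff_le)
qed simp

lemma red_pos: "0 < i \<Longrightarrow> i < length xs \<Longrightarrow> 1 \<le> snd (xs ! i)"
  using urn_move_facts(2)[OF moves[of "i - 1"]] by simp

lemma black_mono:
  assumes "i \<le> j" "j < length xs"
  shows "fst (xs ! j) \<le> fst (xs ! i)"
  using assms(1)
proof (induction j rule: dec_induct)
  case (step k)
  then show ?case using urn_move_facts(3)[OF moves[of k]] assms(2) by simp
qed simp

lemma red_growth:
  assumes "i \<le> j" "j < length xs"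
  shows "snd (xs ! j) \<le> snd (xs ! i) + (j - i)"
  using assms(1)
proof (induction j rule: dec_induct)
  case (step k)
  then show ?case using urn_move_facts(4)[OF moves[of k]] assms(2) by simp
qed simp

end

lemma urn_path_traj:
  "xs \<in> set_pmf (urn_traj m s) \<Longrightarrow> m < fst s + snd s \<Longrightarrow> urn_path xs"
  using set_pmf_urn_traj by unfold_locales auto

lemma set_pmf_urn_iter:
  assumes "x \<in> set_pmf (urn_iter m s)" "m < fst s + snd s"
  shows "fst x + snd x + m = fst s + snd s" "0 < m \<Longrightarrow> 1 \<le> snd x"
proof -
  obtain xs where xs: "xs \<in> set_pmf (urn_traj m s)" and x: "x = xs ! m"
    using assms(1) urn_traj_nth[of m m s] by (metis imageE order.refl set_map_pmf)
  interpret urn_path xs using urn_path_traj[OF xs assms(2)] .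
  have len: "length xs = Suc m" and x0: "xs ! 0 = s" using set_pmf_urn_traj[OF xs assms(2)] by auto
  show "fst x + snd x + m = fst s + snd s" using total[of 0 m] len x0 x by simp
  show "0 < m \<Longrightarrow> 1 \<le> snd x" using red_pos[of m] len x by simp
qed

definition urn_marginal :: "nat \<Rightarrow> nat \<Rightarrow> nat \<Rightarrow> nat \<Rightarrow> real" where
  "urn_marginal n m b r = (if b + r + m = n \<and> 1 \<le> r
     then real (((b + r) choose b) * ((m - 1) choose (r - 1))) / real ((n - 1) choose m) else 0)"

lemma two_times_choose_two: "2 * (Suc n choose 2) = Suc n * n"
  using Suc_times_binomial[of 1 n] by (simp add: numeral_2_eq_2)

(* Each of the three predecessors of (b, r + 1) contributes, after weighting with
   its transition probability, a multiple of C(T, 2) C(b + r, b), where T = b + r + 2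
   is the number of balls before the step. *)
lemma predecessor_weights:
  fixes b r :: nat
  defines "T \<equiv> b + r + 2"
  shows "(T choose (b + 2)) * ((b + 2) choose 2) = (T choose 2) * ((b + r) choose b)"
    and "(T choose (b + 1)) * ((b + 1) * (r + 1)) = 2 * (T choose 2) * ((b + r) choose b)"
    and "(T choose b) * ((r + 2) choose 2) = (T choose 2) * ((b + r) choose b)"
proof -
  show "(T choose (b + 2)) * ((b + 2) choose 2) = (T choose 2) * ((b + r) choose b)"
    using choose_mult_lemma[of b r 2] unfolding T_def by (simp add: add_ac)
  have "(T choose b) * ((r + 2) choose 2) = (T choose (r + 2)) * ((r + 2) choose 2)"
    using binomial_symmetric[of b T] unfolding T_def by simp
  also have "\<dots> = (T choose 2) * ((b + r) choose b)"
    using choose_mult_lemma[of r b 2] binomial_symmetric[of b "b + r"] unfolding T_def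
    by (simp add: add_ac)
  finally show "(T choose b) * ((r + 2) choose 2) = (T choose 2) * ((b + r) choose b)" .
  have "(b + 1) * (T choose (b + 1)) = T * ((b + r + 1) choose b)"
    using Suc_times_binomial[of b "b + r + 1"] unfolding T_def by simp
  moreover have "(r + 1) * ((b + r + 1) choose b) = (b + r + 1) * ((b + r) choose b)"
    using binomial_absorb_comp[of "b + r + 1" b] by simp
  moreover have "T * (b + r + 1) = 2 * (T choose 2)"
    using two_times_choose_two[of "b + r + 1"] unfolding T_def by simp
  ultimately show "(T choose (b + 1)) * ((b + 1) * (r + 1)) = 2 * (T choose 2) * ((b + r) choose b)"
    by (metis (no_types, lifting) mult.assoc mult.commute mult.left_commute)
qed

(* Pascal's rule applied twice. *)
lemma pascal_twice:
  "(if 1 \<le> r then m choose (r - 1) else 0) + 2 * (m choose r) + (m choose Suc r)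
     = Suc (Suc m) choose Suc r"
  by (cases r) (simp_all add: numeral_2_eq_2)

lemma predecessor_sum:
  fixes b r m :: nat
  defines "T \<equiv> b + r + 2" and "c \<equiv> (if 1 \<le> r then m choose (r - 1) else 0)"
  shows "(T choose (b + 2)) * c * ((b + 2) choose 2)
       + (T choose (b + 1)) * (m choose r) * ((b + 1) * (r + 1))
       + (T choose b) * (m choose Suc r) * ((r + 2) choose 2)
       = (T choose 2) * ((b + r) choose b) * (Suc (Suc m) choose Suc r)"
proof -
  note pw = predecessor_weights[of b r, folded T_def]
  have "(T choose (b + 2)) * c * ((b + 2) choose 2)
       + (T choose (b + 1)) * (m choose r) * ((b + 1) * (r + 1))
       + (T choose b) * (m choose Suc r) * ((r + 2) choose 2)
      = c * ((T choose (b + 2)) * ((b + 2) choose 2))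
       + (m choose r) * ((T choose (b + 1)) * ((b + 1) * (r + 1)))
       + (m choose Suc r) * ((T choose b) * ((r + 2) choose 2))"
    by (simp only: mult_ac)
  also have "\<dots> = (T choose 2) * ((b + r) choose b) * (c + 2 * (m choose r) + (m choose Suc r))"
    unfolding pw by (simp add: algebra_simps)
  also have "\<dots> = (T choose 2) * ((b + r) choose b) * (Suc (Suc m) choose Suc r)"
    unfolding c_def pascal_twice ..
  finally show ?thesis .
qed

(* The ratio of the normalising constants of two consecutive times. *)
lemma marginal_normalisation:
  fixes b r m :: nat
  defines "N \<equiv> b + r + m + 2"
  shows "((b + r) choose b) * ((m + 2) choose (r + 1)) * (N choose (m + 2))
       = ((b + r + 1) choose b) * ((m + 1) choose r) * (N choose (m + 1))"
proof -
  define X Y Z where "X = (b + r) choose b" and "Y = (m + 2) choose (r + 1)" and "Z = N choose (m + 2)"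
  define X' Y' Z' where "X' = (b + r + 1) choose b" and "Y' = (m + 1) choose r"
    and "Z' = N choose (m + 1)"
  have a: "(r + 1) * X' = (b + r + 1) * X"
    using binomial_absorb_comp[of "b + r + 1" b] unfolding X_def X'_def by simp
  have c: "(r + 1) * Y = (m + 2) * Y'"
    using Suc_times_binomial[of r "m + 1"] unfolding Y_def Y'_def by simp
  have "(m + 2) * Z = N * ((N - 1) choose (m + 1))"
    using Suc_times_binomial[of "m + 1" "N - 1"] unfolding Z_def N_def by simp
  also have "\<dots> = (b + r + 1) * Z'"
    using binomial_absorb_comp[of N "m + 1"] unfolding Z'_def N_def by simp
  finally have d: "(m + 2) * Z = (b + r + 1) * Z'" .
  have "(r + 1) * (m + 2) * (X * Y * Z) = X * ((r + 1) * Y) * ((m + 2) * Z)"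
    by (simp only: mult_ac)
  also have "\<dots> = ((b + r + 1) * X) * ((m + 2) * Y' * Z')"
    unfolding c d by (simp only: mult_ac)
  also have "\<dots> = (r + 1) * (m + 2) * (X' * Y' * Z')"
    unfolding a[symmetric] by (simp only: mult_ac)
  finally have "(r + 1) * (m + 2) * (X * Y * Z) = (r + 1) * (m + 2) * (X' * Y' * Z')" .
  moreover have "(r + 1) * (m + 2) \<noteq> 0" by simp
  ultimately have "X * Y * Z = X' * Y' * Z'" by (metis mult_left_cancel)
  thus ?thesis unfolding X_def Y_def Z_def X'_def Y'_def Z'_def by simp
qed

lemma urn_marginal_Suc:
  assumes "b + Suc r + Suc (Suc m) = n"
  shows "urn_marginal n (Suc (Suc m)) b (Suc r)
       = real (((b + r) choose b) * (Suc (Suc m) choose Suc r)) / real ((n - 1) choose Suc m)"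
proof -
  have "0 < (n - 1) choose Suc m" "0 < (n - 1) choose Suc (Suc m)" using assms by simp_all
  moreover have "((b + r) choose b) * (Suc (Suc m) choose Suc r) * ((n - 1) choose Suc (Suc m))
      = ((b + Suc r) choose b) * (Suc m choose r) * ((n - 1) choose Suc m)"
  proof -
    have "n - 1 = b + r + m + 2" using assms by simp
    thus ?thesis using marginal_normalisation[of b r m] by (simp add: add_ac del: binomial_Suc_Suc)
  qed
  ultimately show ?thesis using assms unfolding urn_marginal_def
    by (simp add: field_simps flip: of_nat_mult)
qed

lemma urn_marginal_recurrence:
  assumes "1 \<le> m" "b + r + Suc m = n" "1 \<le> r"
  shows "pmf (urn_step (b + 2, r - 1)) (b, r) * urn_marginal n m (b + 2) (r - 1)
       + pmf (urn_step (b + 1, r)) (b, r) * urn_marginal n m (b + 1) r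
       + pmf (urn_step (b, r + 1)) (b, r) * urn_marginal n m b (r + 1)
       = urn_marginal n (Suc m) b r"
proof -
  obtain r' m' where r: "r = Suc r'" and m: "m = Suc m'" using assms by (cases r; cases m) auto
  define T where "T = b + r' + 2"
  define c where "c = (if 1 \<le> r' then m' choose (r' - 1) else 0)"
  define P B where "P = T choose 2" and "B = (b + r') choose b"
  define D where "D = (n - 1) choose m"
  have s1: "pmf (urn_step (b + 2, r - 1)) (b, r) = real ((b + 2) choose 2) / real P"
    using pmf_urn_step_two_blacks[of "b + 2" r'] unfolding r P_def T_def by (simp add: add_ac)
  have s2: "pmf (urn_step (b + 1, r)) (b, r) = real ((b + 1) * (r' + 1)) / real P"
    using pmf_urn_step_mixed[of "b + 1" r] unfolding r P_def T_def by (simp add: add_ac)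
  have s3: "pmf (urn_step (b, r + 1)) (b, r) = real ((r' + 2) choose 2) / real P"
    using pmf_urn_step_two_reds[of "r + 1" b] unfolding r P_def T_def by (simp add: add_ac)
  have q1: "urn_marginal n m (b + 2) (r - 1) = real ((T choose (b + 2)) * c) / real D"
    using assms(2) unfolding urn_marginal_def r m c_def D_def T_def by (auto simp: add_ac)
  have q2: "urn_marginal n m (b + 1) r = real ((T choose (b + 1)) * (m' choose r')) / real D"
    using assms(2) unfolding urn_marginal_def r m D_def T_def by (simp add: add_ac)
  have q3: "urn_marginal n m b (r + 1) = real ((T choose b) * (m' choose Suc r')) / real D"
    using assms(2) unfolding urn_marginal_def r m D_def T_def by (simp add: add_ac)
  note weights = predecessor_sum[of b r' m', folded T_def c_def P_def B_def]
  have "P > 0" unfolding P_def T_def by simp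
  have "D > 0" unfolding D_def using assms(2) by simp
  have "pmf (urn_step (b + 2, r - 1)) (b, r) * urn_marginal n m (b + 2) (r - 1)
       + pmf (urn_step (b + 1, r)) (b, r) * urn_marginal n m (b + 1) r
       + pmf (urn_step (b, r + 1)) (b, r) * urn_marginal n m b (r + 1)
       = real (P * B * (Suc (Suc m') choose Suc r')) / (real P * real D)"
  proof -
    have comb: "x1 / real P * (y1 / real D) + x2 / real P * (y2 / real D) + x3 / real P * (y3 / real D)
        = (y1 * x1 + y2 * x2 + y3 * x3) / (real P * real D)" for x1 x2 x3 y1 y2 y3 :: real
      using \<open>P > 0\<close> \<open>D > 0\<close> by (simp add: field_simps)
    show ?thesis unfolding s1 s2 s3 q1 q2 q3 comb weights[symmetric]
      by (simp only: of_nat_mult of_nat_add)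
  qed
  also have "\<dots> = real (B * (Suc (Suc m') choose Suc r')) / real D"
    using \<open>P > 0\<close> by (simp add: mult_ac)
  also have "\<dots> = urn_marginal n (Suc m) b r"
    using urn_marginal_Suc[of b r' m' n] assms(2) unfolding r m B_def D_def by simp
  finally show ?thesis .
qed

lemma urn_step_all_black: "2 \<le> n \<Longrightarrow> urn_step (n, 0) = return_pmf (n - 2, 1)"
  using set_pmf_urn_step[of n 0] by (subst set_pmf_subset_singleton[symmetric]) auto

(* One more step: only the three predecessors of (b, r) can lead to (b, r). *)
lemma pmf_urn_iter_Suc:
  assumes "Suc m < fst s + snd s"
  shows "pmf (urn_iter (Suc m) s) (b, r)
       = (\<Sum>y\<in>{(b + 2, r - 1), (b + 1, r), (b, r + 1)}. pmf (urn_step y) (b, r) * pmf (urn_iter m s) y)"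
  unfolding urn_iter_Suc_right pmf_bind
proof (rule integral_measure_pmf_real)
  fix y assume y: "y \<in> set_pmf (urn_iter m s)" "pmf (urn_step y) (b, r) \<noteq> 0"
  have "2 \<le> fst y + snd y" using set_pmf_urn_iter(1)[OF y(1)] assms by simp
  hence "urn_move y (b, r)"
    using set_pmf_urn_step[of "fst y" "snd y" "(b, r)"] y(2) by (simp add: set_pmf_eq)
  thus "y \<in> {(b + 2, r - 1), (b + 1, r), (b, r + 1)}" by (rule urn_move_predecessors)
qed simp

lemma pmf_urn_iter_one:
  assumes "2 \<le> n"
  shows "pmf (urn_iter 1 (n, 0)) (b, r) = urn_marginal n 1 b r"
proof -
  have "urn_iter 1 (n, 0) = return_pmf (n - 2, 1)"
    using urn_step_all_black[OF assms] by (simp add: bind_return_pmf')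
  hence "pmf (urn_iter 1 (n, 0)) (b, r) = (if (b, r) = (n - 2, 1) then 1 else 0)"
    by (auto simp: indicator_def)
  also have "\<dots> = urn_marginal n 1 b r"
  proof (cases "(b, r) = (n - 2, 1)")
    case True
    have "(n - 1) choose (n - 2) = n - 1"
      using binomial_symmetric[of "n - 2" "n - 1"] assms by simp
    thus ?thesis using True assms by (simp add: urn_marginal_def)
  qed (auto simp: urn_marginal_def)
  finally show ?thesis .
qed

theorem pmf_urn_iter:
  assumes "1 \<le> m" "m < n"
  shows "pmf (urn_iter m (n, 0)) (b, r) = urn_marginal n m b r"
  using assms
proof (induction m arbitrary: b r rule: nat_induct_at_least)
  case base
  then show ?case by (intro pmf_urn_iter_one) simp
next
  case (Suc m)
  show ?case
  proof (cases "b + r + Suc m = n \<and> 1 \<le> r")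
    case False
    have "(b, r) \<notin> set_pmf (urn_iter (Suc m) (n, 0))"
      using set_pmf_urn_iter[of "(b, r)" "Suc m" "(n, 0)"] Suc.prems False by auto
    hence "pmf (urn_iter (Suc m) (n, 0)) (b, r) = 0" by (simp add: pmf_eq_0_set_pmf)
    thus ?thesis using False unfolding urn_marginal_def by auto
  next
    case True
    thus ?thesis
      using pmf_urn_iter_Suc[of m "(n, 0)" b r] urn_marginal_recurrence[of m b r n] Suc
      by (simp add: add_ac)
  qed
qed

lemma prob_cong_set_pmf:
  assumes "\<And>x. x \<in> set_pmf p \<Longrightarrow> x \<in> A \<longleftrightarrow> x \<in> B"
  shows "measure_pmf.prob p A = measure_pmf.prob p B"
proof -
  have "A \<inter> set_pmf p = B \<inter> set_pmf p" using assms by blast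
  thus ?thesis by (metis measure_Int_set_pmf)
qed

lemma le_Max_down_closed:
  fixes P :: "nat \<Rightarrow> bool"
  assumes "P 1" "1 \<le> n" "1 \<le> k"
    and down: "\<And>i j. 1 \<le> i \<Longrightarrow> i \<le> j \<Longrightarrow> j \<le> n \<Longrightarrow> P j \<Longrightarrow> P i"
  shows "k \<le> Max {j. 1 \<le> j \<and> j \<le> n \<and> P j} \<longleftrightarrow> k \<le> n \<and> P k"
proof -
  have fin: "finite {j. 1 \<le> j \<and> j \<le> n \<and> P j}" by (rule finite_subset[of _ "{..n}"]) auto
  have "1 \<in> {j. 1 \<le> j \<and> j \<le> n \<and> P j}" using assms by simp
  hence "k \<le> Max {j. 1 \<le> j \<and> j \<le> n \<and> P j} \<longleftrightarrow> (\<exists>j. 1 \<le> j \<and> j \<le> n \<and> P j \<and> k \<le> j)"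
    using Max_ge_iff[OF fin] by blast
  also have "\<dots> \<longleftrightarrow> k \<le> n \<and> P k"
  proof
    assume "\<exists>j. 1 \<le> j \<and> j \<le> n \<and> P j \<and> k \<le> j"
    then obtain j where "j \<le> n" "P j" "k \<le> j" by blast
    thus "k \<le> n \<and> P k" using down[of k j] assms(3) by simp
  qed (use assms(3) in blast)
  finally show ?thesis .
qed

definition red_counts :: "nat \<Rightarrow> (nat \<times> nat) list \<Rightarrow> nat \<Rightarrow> nat" where
  "red_counts n xs k = (if k < n then snd (xs ! k) else 0)"

lemma urn_eq_map_traj: "urn n = map_pmf (red_counts n) (urn_traj (n - 1) (n, 0))"
  unfolding urn_def red_counts_def by (simp add: fun_eq_iff)

locale urn_trajectory =
  fixes n :: nat and xs :: "(nat \<times> nat) list"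
  assumes n: "2 \<le> n" and xs: "xs \<in> set_pmf (urn_traj (n - 1) (n, 0))"
begin

lemma traj_length: "length xs = n" and traj_start: "xs ! 0 = (n, 0)"
  using set_pmf_urn_traj[OF xs] n by auto

sublocale urn_path xs
  using urn_path_traj[OF xs] n by simp

lemma remaining: "i < n \<Longrightarrow> fst (xs ! i) + snd (xs ! i) = n - i"
  using total[of 0 i] traj_length traj_start by simp

lemma tau_ge_iff:
  assumes "1 \<le> k"
  shows "k \<le> tau n (red_counts n xs) \<longleftrightarrow> k < n \<and> fst (xs ! (n - k)) = 0"
proof -
  have P: "red_counts n xs (n - j) = j \<longleftrightarrow> j < n \<and> fst (xs ! (n - j)) = 0"
    if "1 \<le> j" "j \<le> n" for j
    using remaining[of "n - j"] that traj_start unfolding red_counts_def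
    by (cases "j = n") auto
  have last: "fst (xs ! (n - 1)) = 0"
    using remaining[of "n - 1"] red_pos[of "n - 1"] traj_length n by simp
  have "k \<le> tau n (red_counts n xs) \<longleftrightarrow> k \<le> n \<and> red_counts n xs (n - k) = k"
    unfolding tau_def
  proof (rule le_Max_down_closed)
    show "red_counts n xs (n - 1) = 1" using P[of 1] last n by simp
    fix i j assume "1 \<le> i" "i \<le> j" "j \<le> n" "red_counts n xs (n - j) = j"
    thus "red_counts n xs (n - i) = i"
      using P[of i] P[of j] black_mono[of "n - j" "n - i"] traj_length by auto
  qed (use n assms in auto)
  thus ?thesis using P[of k] assms by auto
qed

lemma tau'_ge_iff:
  assumes "1 \<le> k"
  shows "k \<le> tau' n (red_counts n xs) \<longleftrightarrow> k < n \<and> snd (xs ! k) = k"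
proof -
  have reds_le: "snd (xs ! i) \<le> i" if "i < n" for i
    using red_growth[of 0 i] traj_start traj_length that by simp
  have "k \<le> tau' n (red_counts n xs) \<longleftrightarrow> k \<le> n \<and> red_counts n xs k = k"
    unfolding tau'_def
  proof (rule le_Max_down_closed)
    show "red_counts n xs 1 = 1"
      using reds_le[of 1] red_pos[of 1] traj_length n unfolding red_counts_def by simp
    fix i j assume "1 \<le> i" "i \<le> j" "j \<le> n" "red_counts n xs j = j"
    thus "red_counts n xs i = i"
      using red_growth[of i j] reds_le[of i] traj_length unfolding red_counts_def
      by (auto split: if_splits)
  qed (use n assms in auto)
  thus ?thesis using assms unfolding red_counts_def by auto
qed

end

lemma prob_urn_via_traj:
  assumes "2 \<le> n" and "\<And>xs. urn_trajectory n xs \<Longrightarrow> E (red_counts n xs) \<longleftrightarrow> F xs"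
  shows "measure_pmf.prob (urn n) {U. E U} = measure_pmf.prob (urn_traj (n - 1) (n, 0)) {xs. F xs}"
proof -
  have "measure_pmf.prob (urn n) {U. E U}
      = measure_pmf.prob (urn_traj (n - 1) (n, 0)) (red_counts n -` {U. E U})"
    unfolding urn_eq_map_traj measure_map_pmf ..
  also have "\<dots> = measure_pmf.prob (urn_traj (n - 1) (n, 0)) {xs. F xs}"
  proof (rule prob_cong_set_pmf)
    fix xs assume "xs \<in> set_pmf (urn_traj (n - 1) (n, 0))"
    with assms(1) have "urn_trajectory n xs" by (rule urn_trajectory.intro)
    thus "xs \<in> red_counts n -` {U. E U} \<longleftrightarrow> xs \<in> {xs. F xs}" using assms(2) by simp
  qed
  finally show ?thesis .
qed

lemma prob_traj_entry:
  assumes "j \<le> m"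
  shows "measure_pmf.prob (urn_traj m s) {xs. F (xs ! j)} = measure_pmf.prob (urn_iter j s) {x. F x}"
proof -
  have "measure_pmf.prob (urn_iter j s) {x. F x}
      = measure_pmf.prob (map_pmf (\<lambda>xs. xs ! j) (urn_traj m s)) {x. F x}"
    using urn_traj_nth[OF assms] by simp
  thus ?thesis unfolding measure_map_pmf vimage_def by simp
qed

lemma prob_single_state:
  assumes "\<And>x. x \<in> set_pmf p \<Longrightarrow> F x \<longleftrightarrow> x = y"
  shows "measure_pmf.prob p {x. F x} = pmf p y"
proof -
  have "measure_pmf.prob p {x. F x} = measure_pmf.prob p {y}"
    by (rule prob_cong_set_pmf) (use assms in blast)
  thus ?thesis by (simp add: measure_pmf_single)
qed

lemma prob_tau_ge:
  assumes "2 \<le> n" "1 \<le> k"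
  shows "measure_pmf.prob (urn n) {U. k \<le> tau n U} = (if k < n then urn_marginal n (n - k) 0 k else 0)"
proof -
  have "measure_pmf.prob (urn n) {U. k \<le> tau n U}
      = measure_pmf.prob (urn_traj (n - 1) (n, 0)) {xs. k < n \<and> fst (xs ! (n - k)) = 0}"
    using assms urn_trajectory.tau_ge_iff by (intro prob_urn_via_traj) auto
  also have "\<dots> = (if k < n then urn_marginal n (n - k) 0 k else 0)"
  proof (cases "k < n")
    case True
    have "measure_pmf.prob (urn_traj (n - 1) (n, 0)) {xs. fst (xs ! (n - k)) = 0}
        = measure_pmf.prob (urn_iter (n - k) (n, 0)) {x. fst x = 0}"
      using assms by (intro prob_traj_entry) simp
    also have "\<dots> = pmf (urn_iter (n - k) (n, 0)) (0, k)"
    proof (rule prob_single_state)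
      fix x assume "x \<in> set_pmf (urn_iter (n - k) (n, 0))"
      hence "fst x + snd x + (n - k) = n" using set_pmf_urn_iter(1) assms by fastforce
      thus "fst x = 0 \<longleftrightarrow> x = (0, k)" using True by (cases x) auto
    qed
    finally show ?thesis using True assms by (simp add: pmf_urn_iter)
  qed simp
  finally show ?thesis .
qed

lemma prob_tau'_ge:
  assumes "2 \<le> n" "1 \<le> k"
  shows "measure_pmf.prob (urn n) {U. k \<le> tau' n U} = (if k < n then urn_marginal n k (n - 2 * k) k else 0)"
proof -
  have "measure_pmf.prob (urn n) {U. k \<le> tau' n U}
      = measure_pmf.prob (urn_traj (n - 1) (n, 0)) {xs. k < n \<and> snd (xs ! k) = k}"
    using assms urn_trajectory.tau'_ge_iff by (intro prob_urn_via_traj) auto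
  also have "\<dots> = (if k < n then urn_marginal n k (n - 2 * k) k else 0)"
  proof (cases "k < n")
    case True
    have "measure_pmf.prob (urn_traj (n - 1) (n, 0)) {xs. snd (xs ! k) = k}
        = measure_pmf.prob (urn_iter k (n, 0)) {x. snd x = k}"
      using True by (intro prob_traj_entry) simp
    also have "\<dots> = pmf (urn_iter k (n, 0)) (n - 2 * k, k)"
    proof (rule prob_single_state)
      fix x assume "x \<in> set_pmf (urn_iter k (n, 0))"
      hence "fst x + snd x + k = n" using set_pmf_urn_iter(1) True by fastforce
      thus "snd x = k \<longleftrightarrow> x = (n - 2 * k, k)" by (cases x) auto
    qed
    finally show ?thesis using True assms by (simp add: pmf_urn_iter)
  qed simp
  finally show ?thesis .
qed

definition tau_tail :: "nat \<Rightarrow> nat \<Rightarrow> real" where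
  "tau_tail n k = (\<Prod>i<k. real n - real k - real i) / (\<Prod>i<k. real n - 1 - real i)"

lemma falling_factorial_binomial: "(\<Prod>i<k. real N - real i) = real (N choose k) * fact k"
  unfolding binomial_gbinomial gbinomial_prod_rev by (simp add: atLeast0LessThan)

lemma tau_tail_binomial:
  assumes "k < n"
  shows "tau_tail n k = real ((n - k) choose k) / real ((n - 1) choose k)"
proof -
  have "(\<Prod>i<k. real n - real k - real i) = (\<Prod>i<k. real (n - k) - real i)"
    "(\<Prod>i<k. real n - 1 - real i) = (\<Prod>i<k. real (n - 1) - real i)"
    using assms by (simp_all add: of_nat_diff)
  thus ?thesis unfolding tau_tail_def falling_factorial_binomial by simp
qed

(* From n on the denominator contains the factor n - 1 - (n - 1) = 0. *)
lemma tau_tail_vanishes: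
  assumes "1 \<le> n" "n \<le> k"
  shows "tau_tail n k = 0"
proof -
  have "(\<Prod>i<k. real n - 1 - real i) = 0"
    using assms by (intro prod_zero bexI[of _ "n - 1"]) (auto simp: of_nat_diff)
  thus ?thesis unfolding tau_tail_def by simp
qed

lemma urn_marginal_last_black:
  assumes "1 \<le> k" "k < n"
  shows "urn_marginal n (n - k) 0 k = tau_tail n k"
proof -
  define a c where "a = (n - k - 1) choose (k - 1)" and "c = (n - 1) choose (k - 1)"
  have kA: "k * ((n - k) choose k) = (n - k) * a"
    using times_binomial_minus1_eq[of k "n - k"] assms unfolding a_def by simp
  have kC: "k * ((n - 1) choose k) = (n - k) * c"
    using times_binomial_minus1_eq[of k "n - 1"] binomial_absorb_comp[of "n - 1" "k - 1"] assms
    unfolding c_def by (simp add: diff_diff_add)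
  have "urn_marginal n (n - k) 0 k = real a / real ((n - 1) choose (n - k))"
    using assms unfolding urn_marginal_def a_def by simp
  also have "(n - 1) choose (n - k) = c"
    using binomial_symmetric[of "k - 1" "n - 1"] assms unfolding c_def by simp
  also have "real a / real c = real ((n - k) * a) / real ((n - k) * c)"
    using assms by simp
  also have "\<dots> = real (k * ((n - k) choose k)) / real (k * ((n - 1) choose k))"
    unfolding kA kC ..
  also have "\<dots> = tau_tail n k"
    using assms unfolding tau_tail_binomial[OF assms(2)] by simp
  finally show ?thesis .
qed

lemma urn_marginal_first_reds:
  assumes "1 \<le> k" "k < n"
  shows "urn_marginal n k (n - 2 * k) k = tau_tail n k"
proof (cases "2 * k \<le> n")
  case True
  hence "(n - k) choose (n - 2 * k) = (n - k) choose k"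
    using binomial_symmetric[of k "n - k"] by (simp add: diff_diff_add mult_2)
  thus ?thesis using True assms unfolding urn_marginal_def tau_tail_binomial[OF assms(2)] by auto
next
  case False
  hence "n - k < k" by simp
  thus ?thesis using False assms unfolding urn_marginal_def tau_tail_binomial[OF assms(2)] by simp
qed

theorem prob_tau_tail:
  assumes "2 \<le> n"
  shows "measure_pmf.prob (urn n) {U. k \<le> tau n U} = tau_tail n k"
  using prob_tau_ge[OF assms, of k] urn_marginal_last_black[of k n] tau_tail_vanishes[of n k] assms
  by (cases "k = 0") (auto simp: tau_tail_def)

theorem prob_tau'_tail:
  assumes "2 \<le> n"
  shows "measure_pmf.prob (urn n) {U. k \<le> tau' n U} = tau_tail n k"
  using prob_tau'_ge[OF assms, of k] urn_marginal_first_reds[of k n] tau_tail_vanishes[of n k] assms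
  by (cases "k = 0") (auto simp: tau_tail_def)

lemma map_pmf_eq_if_tails_eq:
  fixes f g :: "'a \<Rightarrow> nat"
  assumes "\<And>k. measure_pmf.prob p {x. k \<le> f x} = measure_pmf.prob p {x. k \<le> g x}"
  shows "map_pmf f p = map_pmf g p"
proof (rule pmf_eqI)
  fix j
  have "measure_pmf.prob p (h -` {j}) = measure_pmf.prob p {x. j \<le> h x} - measure_pmf.prob p {x. Suc j \<le> h x}"
    for h :: "'a \<Rightarrow> nat"
  proof -
    have eq: "h -` {j} = {x. j \<le> h x} - {x. Suc j \<le> h x}" by auto
    show ?thesis unfolding eq by (rule measure_pmf.finite_measure_Diff) auto
  qed
  thus "pmf (map_pmf f p) j = pmf (map_pmf g p) j" unfolding pmf_map using assms by simp
qed

(* Each factor (n - k - i) / (n - 1 - i) of the tail lies between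
   (n - 2k + 1) / (n - k) >= exp (-(k - 1) / (n - 2k + 1)) and
   (n - k) / (n - 1) <= exp (-(k - 1) / (n - 1)). *)
lemma tail_factor_bounds:
  assumes "i < k" "2 * k \<le> n"
  defines "q \<equiv> (real n - real k - real i) / (real n - 1 - real i)"
  shows "exp (- ((real k - 1) / (real n - 2 * real k + 1))) \<le> q"
    and "q \<le> exp (- ((real k - 1) / (real n - 1)))"
proof -
  define x where "x = (real k - 1) / (real n - 2 * real k + 1)"
  define y where "y = (real k - 1) / (real n - 1)"
  have pos: "real n - 1 - real i > 0" "real n - real k > 0" "real n - 2 * real k + 1 > 0"
    "real k \<ge> 1" using assms by linarith+
  have "real i * 1 \<le> real i * real k" using pos(4) by (intro mult_left_mono) auto
  hence "q \<le> (real n - real k) / (real n - 1)"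
    unfolding q_def using pos by (simp add: divide_simps) (simp add: algebra_simps)
  also have "\<dots> = 1 + (- y)" unfolding y_def using pos by (simp add: field_simps)
  also have "\<dots> \<le> exp (- y)" by (rule exp_ge_add_one_self)
  finally show "q \<le> exp (- ((real k - 1) / (real n - 1)))" unfolding y_def .
  have "0 \<le> x" unfolding x_def using pos by simp
  hence "0 < 1 + x" by simp
  have "exp (- x) = 1 / exp x" by (simp add: exp_minus field_simps)
  also have "\<dots> \<le> 1 / (1 + x)"
    using exp_ge_add_one_self[of x] \<open>0 < 1 + x\<close> by (intro divide_left_mono mult_pos_pos) auto
  also have "\<dots> = (real n - 2 * real k + 1) / (real n - real k)"
    unfolding x_def using pos by (simp add: field_simps)
  also have "\<dots> \<le> q"
  proof -
    have "(real n - real k - real i) * (real n - real k) - (real n - 2 * real k + 1) * (real n - 1 - real i)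
        = (real k - 1 - real i) * (real k - 1)" by (simp add: algebra_simps)
    moreover have "0 \<le> (real k - 1 - real i) * (real k - 1)" using assms(1) pos by simp
    ultimately have "(real n - 2 * real k + 1) * (real n - 1 - real i)
        \<le> (real n - real k - real i) * (real n - real k)" by linarith
    thus ?thesis unfolding q_def using pos by (simp add: divide_simps mult.commute)
  qed
  finally show "exp (- ((real k - 1) / (real n - 2 * real k + 1))) \<le> q" unfolding x_def .
qed

lemma tau_tail_bounds:
  assumes "2 * k \<le> n"
  shows "exp (- (real k * (real k - 1) / (real n - 2 * real k + 1))) \<le> tau_tail n k"
    and "tau_tail n k \<le> exp (- (real k * (real k - 1) / (real n - 1)))"
proof -
  define q where "q i = (real n - real k - real i) / (real n - 1 - real i)" for i
  define x where "x = (real k - 1) / (real n - 2 * real k + 1)"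
  define y where "y = (real k - 1) / (real n - 1)"
  have tail: "tau_tail n k = (\<Prod>i<k. q i)"
    unfolding tau_tail_def q_def by (simp add: prod_dividef)
  have q_bounds: "exp (- x) \<le> q i" "q i \<le> exp (- y)" if "i < k" for i
    using tail_factor_bounds[OF that assms] unfolding q_def x_def y_def by auto
  have "exp (- (real k * (real k - 1) / (real n - 2 * real k + 1))) = exp (real k * - x)"
    unfolding x_def by simp
  also have "\<dots> = exp (- x) ^ k" by (rule exp_of_nat_mult)
  also have "\<dots> = (\<Prod>i<k. exp (- x))" by simp
  also have "\<dots> \<le> tau_tail n k"
    unfolding tail using q_bounds by (intro prod_mono) simp
  finally show "exp (- (real k * (real k - 1) / (real n - 2 * real k + 1))) \<le> tau_tail n k" .
  have "tau_tail n k \<le> (\<Prod>i<k. exp (- y))"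
    unfolding tail using q_bounds by (intro prod_mono) (meson exp_ge_zero order.trans lessThan_iff)
  also have "\<dots> = exp (- y) ^ k" by simp
  also have "\<dots> = exp (real k * - y)" by (rule exp_of_nat_mult[symmetric])
  also have "\<dots> = exp (- (real k * (real k - 1) / (real n - 1)))"
    unfolding y_def by simp
  finally show "tau_tail n k \<le> exp (- (real k * (real k - 1) / (real n - 1)))" .
qed

lemma inverse_sqrt_tendsto_zero: "(\<lambda>n::nat. 1 / sqrt (real n)) \<longlonglongrightarrow> 0"
  by real_asymp

lemma quadratic_ratio_limit:
  fixes k :: "nat \<Rightarrow> nat" and c d :: real
  assumes k: "(\<lambda>n. real (k n) / sqrt (real n)) \<longlonglongrightarrow> t"
  shows "(\<lambda>n. real (k n) * (real (k n) - 1) / (real n - c * real (k n) + d)) \<longlonglongrightarrow> t\<^sup>2"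
proof -
  define u w where "u n = real (k n) / sqrt (real n)" and "w n = 1 / sqrt (real n)" for n
  have "(\<lambda>n. u n * (u n - w n) / (1 - c * u n * w n + d * (w n)\<^sup>2))
      \<longlonglongrightarrow> t * (t - 0) / (1 - c * t * 0 + d * 0\<^sup>2)"
    using k inverse_sqrt_tendsto_zero unfolding u_def w_def by (intro tendsto_intros) auto
  moreover have "\<forall>\<^sub>F n in sequentially. u n * (u n - w n) / (1 - c * u n * w n + d * (w n)\<^sup>2)
      = real (k n) * (real (k n) - 1) / (real n - c * real (k n) + d)"
    using eventually_gt_at_top[of "0::nat"]
  proof eventually_elim
    case (elim n)
    define s where "s = sqrt (real n)"
    have s: "s > 0" "s\<^sup>2 = real n" unfolding s_def using elim by simp_all
    have "u n * (u n - w n) = real (k n) * (real (k n) - 1) / s\<^sup>2"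
      unfolding u_def w_def s_def[symmetric] using s(1) by (simp add: field_simps power2_eq_square)
    moreover have "1 - c * u n * w n + d * (w n)\<^sup>2 = (s\<^sup>2 - c * real (k n) + d) / s\<^sup>2"
      unfolding u_def w_def s_def[symmetric] using s(1) by (simp add: field_simps power2_eq_square)
    ultimately show ?case using s elim by simp
  qed
  ultimately show ?thesis by (simp add: Lim_transform_eventually power2_eq_square)
qed

lemma ceiling_sqrt_ratio_limit:
  fixes t :: real
  assumes "0 \<le> t"
  shows "(\<lambda>n. real (nat \<lceil>t * sqrt (real n)\<rceil>) / sqrt (real n)) \<longlonglongrightarrow> t"
proof (rule tendsto_sandwich)
  have ceil: "real (nat \<lceil>t * sqrt (real n)\<rceil>) = of_int \<lceil>t * sqrt (real n)\<rceil>" for n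
    using assms by simp
  show "\<forall>\<^sub>F n in sequentially. t \<le> real (nat \<lceil>t * sqrt (real n)\<rceil>) / sqrt (real n)"
    using eventually_gt_at_top[of "0::nat"]
    by eventually_elim (simp add: ceil le_divide_eq le_of_int_ceiling)
  show "\<forall>\<^sub>F n in sequentially. real (nat \<lceil>t * sqrt (real n)\<rceil>) / sqrt (real n) \<le> t + 1 / sqrt (real n)"
    using eventually_gt_at_top[of "0::nat"]
    by eventually_elim (simp add: ceil divide_le_eq add_divide_distrib[symmetric] distrib_right
        of_int_ceiling_le_add_one)
  show "(\<lambda>n. t + 1 / sqrt (real n)) \<longlonglongrightarrow> t"
    using tendsto_add[OF tendsto_const inverse_sqrt_tendsto_zero, of t] by simp
qed simp

lemma ge_div_sqrt_iff:
  assumes "0 < n"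
  shows "t \<le> real m / sqrt (real n) \<longleftrightarrow> nat \<lceil>t * sqrt (real n)\<rceil> \<le> m"
  using assms by (simp add: le_divide_eq ceiling_le_iff nat_le_iff)

lemma tau_tail_limit:
  fixes k :: "nat \<Rightarrow> nat"
  assumes k: "(\<lambda>n. real (k n) / sqrt (real n)) \<longlonglongrightarrow> t"
  shows "(\<lambda>n. tau_tail n (k n)) \<longlonglongrightarrow> exp (- (t\<^sup>2))"
proof (rule tendsto_sandwich)
  have "(\<lambda>n. real (k n) / sqrt (real n) * (1 / sqrt (real n))) \<longlonglongrightarrow> t * 0"
    by (intro tendsto_mult k inverse_sqrt_tendsto_zero)
  hence "\<forall>\<^sub>F n in sequentially. real (k n) / sqrt (real n) * (1 / sqrt (real n)) < 1 / 2"
    by (rule order_tendstoD) simp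
  hence small: "\<forall>\<^sub>F n in sequentially. 2 * k n \<le> n"
    using eventually_gt_at_top[of "0::nat"]
  proof eventually_elim
    case (elim n)
    hence "real (k n) / real n < 1 / 2" by (simp add: field_simps)
    thus ?case using elim(2) by (simp add: field_simps)
  qed
  show "\<forall>\<^sub>F n in sequentially.
      exp (- (real (k n) * (real (k n) - 1) / (real n - 2 * real (k n) + 1))) \<le> tau_tail n (k n)"
    using small by eventually_elim (rule tau_tail_bounds(1))
  show "\<forall>\<^sub>F n in sequentially. tau_tail n (k n) \<le> exp (- (real (k n) * (real (k n) - 1) / (real n - 1)))"
    using small by eventually_elim (rule tau_tail_bounds(2))
  show "(\<lambda>n. exp (- (real (k n) * (real (k n) - 1) / (real n - 2 * real (k n) + 1))))
      \<longlonglongrightarrow> exp (- (t\<^sup>2))"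
    using quadratic_ratio_limit[OF k, of 2 1] by (intro tendsto_intros)
  have "(\<lambda>n. real (k n) * (real (k n) - 1) / (real n - 1)) \<longlonglongrightarrow> t\<^sup>2"
    using quadratic_ratio_limit[OF k, of 0 "-1"] by simp
  thus "(\<lambda>n. exp (- (real (k n) * (real (k n) - 1) / (real n - 1)))) \<longlonglongrightarrow> exp (- (t\<^sup>2))"
    by (intro tendsto_intros)
qed

theorem mainTheorem10:
  shows "(\<forall>n\<ge>2. map_pmf (tau n) (urn n) = map_pmf (tau' n) (urn n))
    \<and> (\<forall>n\<ge>2. \<forall>k\<ge>1. measure_pmf.prob (urn n) {U. tau n U \<ge> k}
          = (\<Prod>i<k. real n - real k - real i) / (\<Prod>i<k. real n - 1 - real i))
    \<and> (\<forall>t::real\<ge>0. (\<lambda>n. measure_pmf.prob (urn n) {U. real (tau n U) / sqrt (real n) \<ge> t})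
          \<longlonglongrightarrow> exp (- (t\<^sup>2)))"
proof (intro conjI allI impI)
  fix n :: nat assume "2 \<le> n"
  thus "map_pmf (tau n) (urn n) = map_pmf (tau' n) (urn n)"
    by (intro map_pmf_eq_if_tails_eq) (simp add: prob_tau_tail prob_tau'_tail)
next
  fix n k :: nat assume "2 \<le> n" "1 \<le> k"
  thus "measure_pmf.prob (urn n) {U. tau n U \<ge> k}
      = (\<Prod>i<k. real n - real k - real i) / (\<Prod>i<k. real n - 1 - real i)"
    using prob_tau_tail unfolding tau_tail_def by simp
next
  fix t :: real assume "0 \<le> t"
  define K where "K n = nat \<lceil>t * sqrt (real n)\<rceil>" for n
  have "(\<lambda>n. tau_tail n (K n)) \<longlonglongrightarrow> exp (- (t\<^sup>2))"
    by (rule tau_tail_limit) (use ceiling_sqrt_ratio_limit[OF \<open>0 \<le> t\<close>] in \<open>simp add: K_def\<close>)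
  moreover have "\<forall>\<^sub>F n in sequentially.
      tau_tail n (K n) = measure_pmf.prob (urn n) {U. real (tau n U) / sqrt (real n) \<ge> t}"
    using eventually_ge_at_top[of "2::nat"]
  proof eventually_elim
    case (elim n)
    hence "{U. real (tau n U) / sqrt (real n) \<ge> t} = {U. K n \<le> tau n U}"
      using ge_div_sqrt_iff[of n t] unfolding K_def by auto
    thus ?case using prob_tau_tail elim by simp
  qed
  ultimately show "(\<lambda>n. measure_pmf.prob (urn n) {U. real (tau n U) / sqrt (real n) \<ge> t})
      \<longlonglongrightarrow> exp (- (t\<^sup>2))"
    by (rule Lim_transform_eventually)
qed

end
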